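(* Consider an instance of MinMD$+$OCTC$_{line}$ in which every base station satisfies $y(b_k)\ge 0$ and the base stations $b_1,\dots,b_m$ are indexed in nondecreasing order of $x$-coordinate. Then there exists an optimal solution with the following properties: (i) for each opened base station $b_k$, the destinations of the sensors emitted by $b_k$ are consecutive on $L$, i.e., if $s,s'$ are emitted by $b_k$ then every sensor whose destination lies between the destinations of $s$ and $s'$ on $L$ is also emitted by $b_k$; (ii) if $k<k'$ and both $b_k,b_{k'}$ emit sensors, then every sensor emitted by $b_k$ lies to the left of every sensor emitted by $b_{k'}$ on $L$.
   Context: MinMD$+$OCTC$_{line}$: targets $\mathcal{T}=\{t_1,\dots,t_n\}$ lie on a line $L$, taken as the $x$-axis, so $t_i=(x(t_i),0)$. Base stations $\mathcal{B}=\{b_1,\dots,b_m\}$ are points of the plane, indexed in nondecreasing order of $x$-coordinate, and $b_k$ has an opening cost $c_k\ge 0$. A fixed radius $r\ge 0$ is given. A solution consists of a set of opened base stations and a finite multiset of mobile sensors; each sensor $s$ is emitted by some opened base station $b_k$ and is placed at a destination point on $L$; its moving distance $d_k(s)$ is the Euclidean distance from $b_k$ to the destination of $s$. A sensor covers a target if the target is at Euclidean distance at most $r$ from the sensor's destination. An opened base station may emit arbitrarily many sensors. A solution is feasible if every target is covered by some sensor; its cost is the sum of the opening costs of opened base stations plus the sum of the moving distances of all sensors. The goal is to find a feasible solution of minimum cost. *)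

theory Defs
  imports "HOL-Analysis.Analysis" "HOL-Library.Multiset"
begin

text \<open>The line L is the x-axis of the plane real \<times> real.
  Base stations are indexed 0,...,m-1; station k is at point b k with opening cost c k.
  Targets are given by their x-coordinates (a finite set T of reals), target t is at (t,0).
  A sensor is a pair (k, p): it is emitted by station k and its destination is (p,0) on L.
  A solution is a pair (Opn, S) of a set Opn of opened stations and a finite multiset S of sensors.\<close>

definition move_dist :: "(nat \<Rightarrow> real \<times> real) \<Rightarrow> nat \<times> real \<Rightarrow> real" where
  "move_dist b s = dist (b (fst s)) (snd s, 0)"

definition covers :: "real \<Rightarrow> nat \<times> real \<Rightarrow> real \<Rightarrow> bool" where
  "covers r s t \<longleftrightarrow> dist (snd s, 0::real) (t, 0) \<le> r"

definition feasible :: "nat \<Rightarrow> real set \<Rightarrow> real \<Rightarrow> nat set \<Rightarrow> (nat \<times> real) multiset \<Rightarrow> bool" where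
  "feasible m T r Opn S \<longleftrightarrow>
     Opn \<subseteq> {..<m} \<and> (\<forall>s\<in>#S. fst s \<in> Opn) \<and> (\<forall>t\<in>T. \<exists>s\<in>#S. covers r s t)"

definition cost :: "(nat \<Rightarrow> real) \<Rightarrow> (nat \<Rightarrow> real \<times> real) \<Rightarrow> nat set \<Rightarrow> (nat \<times> real) multiset \<Rightarrow> real" where
  "cost c b Opn S = (\<Sum>k\<in>Opn. c k) + sum_mset (image_mset (move_dist b) S)"

definition optimal :: "nat \<Rightarrow> real set \<Rightarrow> real \<Rightarrow> (nat \<Rightarrow> real) \<Rightarrow> (nat \<Rightarrow> real \<times> real)
    \<Rightarrow> nat set \<Rightarrow> (nat \<times> real) multiset \<Rightarrow> bool" where
  "optimal m T r c b Opn S \<longleftrightarrow> feasible m T r Opn S \<and>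
     (\<forall>Opn' S'. feasible m T r Opn' S' \<longrightarrow> cost c b Opn S \<le> cost c b Opn' S')"

end

theory Submission
  imports Defs
begin

text \<open>First, a sensor can always be moved, without increasing its moving
  distance, to the point of the window of positions covering the same targets that is closest
  to the x-coordinate of its station; these finitely many candidate points make the optimisation
  a minimum over a finite family, and optimal solutions exist in which the sensors occupy
  distinct points and each is emitted by the nearest opened station. Second, since
  |b - (p,0)|^2 - |b' - (p,0)|^2 is affine in p with slope 2 (x(b') - x(b)), the nearest
  opened station (ties broken towards the smaller index) is a nondecreasing function of p,
  which yields both the consecutiveness and the left-to-right order of the emitted sensors.\<close>

lemma dist_to_line: "dist (a::real \<times> real) (p, 0) = sqrt ((fst a - p)\<^sup>2 + (snd a)\<^sup>2)"
  by (cases a) (simp add: dist_Pair_Pair dist_real_def)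

lemma covers_iff: "covers r s t \<longleftrightarrow> \<bar>snd s - t\<bar> \<le> r"
  by (simp add: covers_def dist_Pair_Pair dist_real_def)

lemma dist_to_line_mono:
  fixes a :: "real \<times> real"
  assumes "\<bar>fst a - q\<bar> \<le> \<bar>fst a - p\<bar>"
  shows "dist a (q, 0) \<le> dist a (p, 0)"
proof -
  have "(fst a - q)\<^sup>2 \<le> (fst a - p)\<^sup>2"
    using assms by (simp add: abs_le_square_iff)
  then show ?thesis unfolding dist_to_line by simp
qed

lemma dist_to_line_less_right:
  fixes a a' :: "real \<times> real"
  assumes "fst a \<le> fst a'" "p \<le> p'" "dist a' (p, 0) < dist a (p, 0)"
  shows "dist a' (p', 0) < dist a (p', 0)"
proof -
  have "(fst a' - p)\<^sup>2 + (snd a')\<^sup>2 < (fst a - p)\<^sup>2 + (snd a)\<^sup>2"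
    using assms(3) unfolding dist_to_line by (simp add: real_sqrt_less_iff)
  moreover have "(p' - p) * (fst a - fst a') \<le> 0"
    using assms(1,2) by (simp add: mult_nonneg_nonpos)
  ultimately have "(fst a' - p')\<^sup>2 + (snd a')\<^sup>2 < (fst a - p')\<^sup>2 + (snd a)\<^sup>2"
    by (simp add: power2_eq_square algebra_simps)
  then show ?thesis unfolding dist_to_line by (simp add: real_sqrt_less_iff)
qed

definition nearest_station :: "(nat \<Rightarrow> real \<times> real) \<Rightarrow> nat set \<Rightarrow> real \<Rightarrow> nat" where
  "nearest_station b K p = (LEAST k. k \<in> K \<and> (\<forall>j\<in>K. dist (b k) (p, 0) \<le> dist (b j) (p, 0)))"

lemma nearest_station:
  assumes "finite K" "K \<noteq> {}"
  shows nearest_station_in: "nearest_station b K p \<in> K"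
    and nearest_station_le: "j \<in> K \<Longrightarrow> dist (b (nearest_station b K p)) (p, 0) \<le> dist (b j) (p, 0)"
    and nearest_station_less:
      "j \<in> K \<Longrightarrow> j < nearest_station b K p \<Longrightarrow>
         dist (b (nearest_station b K p)) (p, 0) < dist (b j) (p, 0)"
proof -
  let ?nearest = "\<lambda>k. k \<in> K \<and> (\<forall>j\<in>K. dist (b k) (p, 0) \<le> dist (b j) (p, 0))"
  have "Min ((\<lambda>j. dist (b j) (p, 0)) ` K) \<in> (\<lambda>j. dist (b j) (p, 0)) ` K"
    using assms by simp
  then obtain k where "k \<in> K" "dist (b k) (p, 0) = Min ((\<lambda>j. dist (b j) (p, 0)) ` K)"
    by auto
  then have "?nearest k" using assms by auto
  then have least: "?nearest (nearest_station b K p)"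
    unfolding nearest_station_def by (rule LeastI)
  then show "nearest_station b K p \<in> K"
    and "j \<in> K \<Longrightarrow> dist (b (nearest_station b K p)) (p, 0) \<le> dist (b j) (p, 0)"
    by auto
  assume "j \<in> K" "j < nearest_station b K p"
  then have "\<not> ?nearest j"
    unfolding nearest_station_def using not_less_Least by blast
  with \<open>j \<in> K\<close> least show "dist (b (nearest_station b K p)) (p, 0) < dist (b j) (p, 0)"
    by (meson linorder_not_le order_trans)
qed

lemma nearest_station_mono:
  assumes "finite K" and mono: "mono_on K (\<lambda>k. fst (b k))" and "p \<le> p'"
  shows "nearest_station b K p \<le> nearest_station b K p'"
proof (cases "K = {}")
  case True
  then show ?thesis by (simp add: nearest_station_def)
next
  case False
  show ?thesis
  proof (rule ccontr)
    define k where "k = nearest_station b K p'"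
    define j where "j = nearest_station b K p"
    assume "\<not> j \<le> k"
    then have "k < j" by simp
    have "k \<in> K" "j \<in> K"
      unfolding k_def j_def using nearest_station_in[OF \<open>finite K\<close> False] by auto
    then have "fst (b k) \<le> fst (b j)"
      using mono \<open>k < j\<close> by (simp add: mono_on_def)
    moreover have "dist (b j) (p, 0) < dist (b k) (p, 0)"
      using nearest_station_less[OF \<open>finite K\<close> False \<open>k \<in> K\<close>] \<open>k < j\<close> j_def
      by simp
    ultimately have "dist (b j) (p', 0) < dist (b k) (p', 0)"
      using dist_to_line_less_right \<open>p \<le> p'\<close> by blast
    moreover have "dist (b k) (p', 0) \<le> dist (b j) (p', 0)"
      unfolding k_def using nearest_station_le[OF \<open>finite K\<close> False \<open>j \<in> K\<close>] .
    ultimately show False by simp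
  qed
qed

definition assign_nearest :: "(nat \<Rightarrow> real \<times> real) \<Rightarrow> nat set \<Rightarrow> real set \<Rightarrow> (nat \<times> real) multiset" where
  "assign_nearest b K P = mset_set ((\<lambda>p. (nearest_station b K p, p)) ` P)"

lemma mem_assign_nearest:
  assumes "finite P"
  shows "s \<in># assign_nearest b K P \<longleftrightarrow> (\<exists>p\<in>P. s = (nearest_station b K p, p))"
  using assms unfolding assign_nearest_def by auto

lemma assign_nearest_consecutive:
  assumes "finite K" "mono_on K (\<lambda>k. fst (b k))" "finite P"
  shows "\<forall>s\<in>#assign_nearest b K P. \<forall>s'\<in>#assign_nearest b K P. \<forall>s''\<in>#assign_nearest b K P.
    fst s = fst s' \<and> snd s \<le> snd s'' \<and> snd s'' \<le> snd s' \<longrightarrow> fst s'' = fst s"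
proof (intro ballI impI, elim conjE)
  fix s s' s'' assume "s \<in># assign_nearest b K P" "s' \<in># assign_nearest b K P"
    "s'' \<in># assign_nearest b K P" and order: "fst s = fst s'" "snd s \<le> snd s''" "snd s'' \<le> snd s'"
  then obtain p p' p'' where "s = (nearest_station b K p, p)" "s' = (nearest_station b K p', p')"
    and "s'' = (nearest_station b K p'', p'')"
    unfolding mem_assign_nearest[OF \<open>finite P\<close>] by blast
  then show "fst s'' = fst s"
    using nearest_station_mono[OF assms(1,2), of p p''] nearest_station_mono[OF assms(1,2), of p'' p']
      order by auto
qed

lemma assign_nearest_ordered:
  assumes "finite K" "mono_on K (\<lambda>k. fst (b k))" "finite P"
  shows "\<forall>s\<in>#assign_nearest b K P. \<forall>s'\<in>#assign_nearest b K P. fst s < fst s' \<longrightarrow> snd s < snd s'"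
proof (intro ballI impI)
  fix s s' assume "s \<in># assign_nearest b K P" "s' \<in># assign_nearest b K P" "fst s < fst s'"
  moreover from this obtain p p' where "s = (nearest_station b K p, p)" "s' = (nearest_station b K p', p')"
    unfolding mem_assign_nearest[OF \<open>finite P\<close>] by blast
  ultimately show "snd s < snd s'"
    using nearest_station_mono[OF assms(1,2), of p' p] by force
qed

lemma sum_set_mset_le_sum_mset:
  fixes h :: "'a \<Rightarrow> real"
  assumes "\<And>x. x \<in># M \<Longrightarrow> 0 \<le> h x"
  shows "(\<Sum>x\<in>set_mset M. h x) \<le> (\<Sum>x\<in>#M. h x)"
  using assms
proof (induction M)
  case (add x M)
  then have "0 \<le> h x" "(\<Sum>x\<in>set_mset M. h x) \<le> (\<Sum>x\<in>#M. h x)"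
    by auto
  then show ?case
    by (cases "x \<in># M") (auto simp: insert_absorb)
qed simp

text \<open>Among the points covering all of a nonempty finite set G of targets, i.e. the interval
  [Max G - r, Min G + r], the one closest to x.\<close>

definition snap :: "real \<Rightarrow> real set \<Rightarrow> real \<Rightarrow> real" where
  "snap r G x = max (Max G - r) (min (Min G + r) x)"

lemma snap:
  assumes "finite G" "G \<noteq> {}" "\<forall>t\<in>G. \<bar>p - t\<bar> \<le> r"
  shows snap_covers: "t \<in> G \<Longrightarrow> \<bar>snap r G x - t\<bar> \<le> r"
    and snap_closer: "\<bar>x - snap r G x\<bar> \<le> \<bar>x - p\<bar>"
proof -
  have window: "Max G - r \<le> p" "p \<le> Min G + r"
    using assms Max_in[OF assms(1,2)] Min_in[OF assms(1,2)] by fastforce+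
  show "\<bar>x - snap r G x\<bar> \<le> \<bar>x - p\<bar>"
    using window unfolding snap_def by linarith
  assume "t \<in> G"
  then have "Min G \<le> t" "t \<le> Max G" using assms(1) by auto
  then show "\<bar>snap r G x - t\<bar> \<le> r"
    using window unfolding snap_def by linarith
qed

definition candidate_positions :: "(nat \<Rightarrow> real \<times> real) \<Rightarrow> real set \<Rightarrow> real \<Rightarrow> nat \<Rightarrow> real set" where
  "candidate_positions b T r m = (\<lambda>(G, k). snap r G (fst (b k))) ` ((Pow T - {{}}) \<times> {..<m})"

lemma finite_candidate_positions: "finite T \<Longrightarrow> finite (candidate_positions b T r m)"
  unfolding candidate_positions_def by simp

lemma sum_move_dist_assign_nearest_le:
  assumes "finite K" "finite A" and opened: "\<And>s. s \<in> A \<Longrightarrow> fst s \<in> K"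
    and closer: "\<And>s. s \<in> A \<Longrightarrow> dist (b (fst s)) (pos s, 0) \<le> move_dist b s"
  shows "(\<Sum>s\<in>#assign_nearest b K (pos ` A). move_dist b s) \<le> (\<Sum>s\<in>A. move_dist b s)"
proof -
  let ?g = "\<lambda>p. move_dist b (nearest_station b K p, p)"
  have "(\<Sum>s\<in>#assign_nearest b K (pos ` A). move_dist b s) = (\<Sum>p\<in>pos ` A. ?g p)"
    unfolding assign_nearest_def sum_unfold_sum_mset[symmetric] by (simp add: sum.reindex inj_on_def)
  also have "\<dots> \<le> sum (?g \<circ> pos) A"
    by (rule sum_image_le) (simp_all add: \<open>finite A\<close> move_dist_def)
  also have "\<dots> \<le> (\<Sum>s\<in>A. move_dist b s)"
  proof (rule sum_mono)
    fix s assume "s \<in> A"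
    then have "K \<noteq> {}" using opened by blast
    then have "?g (pos s) \<le> dist (b (fst s)) (pos s, 0)"
      using nearest_station_le[OF \<open>finite K\<close> _ opened[OF \<open>s \<in> A\<close>]] by (simp add: move_dist_def)
    with closer[OF \<open>s \<in> A\<close>] show "(?g \<circ> pos) s \<le> move_dist b s" by simp
  qed
  finally show ?thesis .
qed

lemma normalize_solution:
  assumes feasible: "feasible m T r K S" and "finite T"
  obtains P where "P \<subseteq> candidate_positions b T r m"
    and "feasible m T r K (assign_nearest b K P)"
    and "cost c b K (assign_nearest b K P) \<le> cost c b K S"
proof -
  have K: "K \<subseteq> {..<m}" "finite K" and S: "\<And>s. s \<in># S \<Longrightarrow> fst s \<in> K"
    and cover: "\<And>t. t \<in> T \<Longrightarrow> \<exists>s\<in>#S. covers r s t"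
    using feasible finite_subset unfolding feasible_def by auto
  define targets where "targets s = {t \<in> T. covers r s t}" for s
  define A where "A = {s \<in> set_mset S. targets s \<noteq> {}}"
  define pos where "pos s = snap r (targets s) (fst (b (fst s)))" for s
  define P where "P = pos ` A"
  let ?near = "nearest_station b K"
  have pos_covers: "\<And>t. t \<in> targets s \<Longrightarrow> covers r (k, pos s) t"
    and pos_closer: "dist (b (fst s)) (pos s, 0) \<le> move_dist b s"
    if "s \<in> A" for s k
  proof -
    have "finite (targets s)" using \<open>finite T\<close> unfolding targets_def by simp
    moreover have "targets s \<noteq> {}" "\<forall>t\<in>targets s. \<bar>snd s - t\<bar> \<le> r"
      using that unfolding A_def targets_def covers_iff by auto
    ultimately show "\<And>t. t \<in> targets s \<Longrightarrow> covers r (k, pos s) t"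
      and "dist (b (fst s)) (pos s, 0) \<le> move_dist b s"
      unfolding pos_def covers_iff move_dist_def
      by (auto intro: snap_covers dist_to_line_mono snap_closer)
  qed
  have station_opened: "fst s \<in> K" if "s \<in> A" for s
    using S that unfolding A_def by simp
  then have nonempty: "K \<noteq> {}" if "s \<in> A" for s
    using that by blast
  have "finite A" unfolding A_def by simp
  then have "finite P" unfolding P_def by simp
  have candidates: "P \<subseteq> candidate_positions b T r m"
  proof
    fix q assume "q \<in> P"
    then obtain s where "s \<in> A" "q = pos s" unfolding P_def by blast
    moreover from this have "fst s \<in> K" using station_opened by blast
    ultimately have "(targets s, fst s) \<in> (Pow T - {{}}) \<times> {..<m}"
      using K unfolding A_def targets_def by auto
    then show "q \<in> candidate_positions b T r m"
      unfolding candidate_positions_def \<open>q = pos s\<close> pos_def by force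
  qed
  have feasible_normal: "feasible m T r K (assign_nearest b K P)"
    unfolding feasible_def
  proof (intro conjI ballI)
    fix s assume "s \<in># assign_nearest b K P"
    then obtain p where "p \<in> P" "s = (?near p, p)"
      unfolding mem_assign_nearest[OF \<open>finite P\<close>] by blast
    then show "fst s \<in> K"
      using nonempty nearest_station_in[OF \<open>finite K\<close>] unfolding P_def by auto
  next
    fix t assume "t \<in> T"
    then obtain s where "s \<in># S" "covers r s t" using cover by blast
    then have "s \<in> A" "t \<in> targets s" unfolding A_def targets_def using \<open>t \<in> T\<close> by auto
    moreover from this have "pos s \<in> P" unfolding P_def by blast
    then have "(?near (pos s), pos s) \<in># assign_nearest b K P"
      using mem_assign_nearest[OF \<open>finite P\<close>] by blast
    ultimately show "\<exists>s\<in>#assign_nearest b K P. covers r s t"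
      using pos_covers by blast
  qed (fact K(1))
  have "(\<Sum>s\<in>#assign_nearest b K P. move_dist b s) \<le> (\<Sum>s\<in>A. move_dist b s)"
    unfolding P_def using \<open>finite K\<close> \<open>finite A\<close> station_opened pos_closer
    by (rule sum_move_dist_assign_nearest_le)
  also have "\<dots> \<le> (\<Sum>s\<in>set_mset S. move_dist b s)"
    by (rule sum_mono2) (auto simp: A_def move_dist_def)
  also have "\<dots> \<le> (\<Sum>s\<in>#S. move_dist b s)"
    by (rule sum_set_mset_le_sum_mset) (simp add: move_dist_def)
  finally have "cost c b K (assign_nearest b K P) \<le> cost c b K S"
    unfolding cost_def by simp
  with candidates feasible_normal show thesis by (rule that)
qed

lemma ex_optimal_assign_nearest:
  assumes "finite T" and "feasible m T r K\<^sub>0 S\<^sub>0"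
  obtains K P where "optimal m T r c b K (assign_nearest b K P)" "K \<subseteq> {..<m}" "finite P"
proof -
  define Q where "Q = candidate_positions b T r m"
  define F where "F = {(K, P). K \<subseteq> {..<m} \<and> P \<subseteq> Q \<and> feasible m T r K (assign_nearest b K P)}"
  define f where "f = (\<lambda>(K, P). cost c b K (assign_nearest b K P))"
  have "finite Q" unfolding Q_def using finite_candidate_positions[OF \<open>finite T\<close>] .
  have "F \<subseteq> Pow {..<m} \<times> Pow Q" unfolding F_def by auto
  then have "finite F" by (rule finite_subset) (simp add: \<open>finite Q\<close>)
  have normal_form_in_F: "\<exists>P. (K, P) \<in> F \<and> f (K, P) \<le> cost c b K S"
    if feasible: "feasible m T r K S" for K S
  proof -
    obtain P where "P \<subseteq> Q" "feasible m T r K (assign_nearest b K P)"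
      and cheaper: "cost c b K (assign_nearest b K P) \<le> cost c b K S"
      using normalize_solution[OF feasible \<open>finite T\<close>] unfolding Q_def by blast
    moreover have "K \<subseteq> {..<m}" using feasible unfolding feasible_def by blast
    ultimately have "(K, P) \<in> F" unfolding F_def by simp
    with cheaper show ?thesis unfolding f_def by auto
  qed
  then have "F \<noteq> {}" using assms(2) by blast
  then obtain KP where "is_arg_min f (\<lambda>x. x \<in> F) KP"
    using ex_is_arg_min_if_finite[OF \<open>finite F\<close>] by blast
  then obtain K P where "(K, P) \<in> F" and min: "\<And>x. x \<in> F \<Longrightarrow> f (K, P) \<le> f x"
    by (cases KP) (auto simp: is_arg_min_linorder)
  have "optimal m T r c b K (assign_nearest b K P)"
    unfolding optimal_def
  proof (intro conjI allI impI)
    show "feasible m T r K (assign_nearest b K P)" using \<open>(K, P) \<in> F\<close> unfolding F_def by blast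
  next
    fix K' S' assume "feasible m T r K' S'"
    then obtain P' where "(K', P') \<in> F" "f (K', P') \<le> cost c b K' S'"
      using normal_form_in_F by blast
    then show "cost c b K (assign_nearest b K P) \<le> cost c b K' S'"
      using min[of "(K', P')"] unfolding f_def by simp
  qed
  moreover have "K \<subseteq> {..<m}" "P \<subseteq> Q" using \<open>(K, P) \<in> F\<close> unfolding F_def by auto
  moreover from \<open>P \<subseteq> Q\<close> \<open>finite Q\<close> have "finite P" by (rule finite_subset)
  ultimately show thesis using that by blast
qed

lemma feasible_single_station:
  assumes "k < m" "r \<ge> 0" "finite T"
  shows "feasible m T r {k} (mset_set ((\<lambda>t. (k, t)) ` T))"
proof -
  have "covers r (k, t) t" for t using \<open>r \<ge> 0\<close> by (simp add: covers_iff)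
  then show ?thesis using assms unfolding feasible_def by auto
qed

theorem lemma2:
  fixes m :: nat and T :: "real set" and r :: real
    and c :: "nat \<Rightarrow> real" and b :: "nat \<Rightarrow> real \<times> real"
  assumes "finite T" and "r \<ge> 0" and "m \<ge> 1"
    and "\<forall>k<m. c k \<ge> 0"
    and "\<forall>k<m. snd (b k) \<ge> 0"
    and "\<forall>k k'. k \<le> k' \<longrightarrow> k' < m \<longrightarrow> fst (b k) \<le> fst (b k')"
  shows "\<exists>Opn S. optimal m T r c b Opn S \<and>
    (\<forall>s\<in>#S. \<forall>s'\<in>#S. \<forall>s''\<in>#S.
        fst s = fst s' \<and> snd s \<le> snd s'' \<and> snd s'' \<le> snd s' \<longrightarrow> fst s'' = fst s) \<and>
    (\<forall>s\<in>#S. \<forall>s'\<in>#S. fst s < fst s' \<longrightarrow> snd s < snd s')"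
proof -
  \<comment> \<open>Nonnegativity of the opening costs and of the y-coordinates of the stations is not needed.\<close>
  have "feasible m T r {0} (mset_set ((\<lambda>t. (0, t)) ` T))"
    using feasible_single_station assms(1-3) by simp
  then obtain K P where opt: "optimal m T r c b K (assign_nearest b K P)"
    and "K \<subseteq> {..<m}" "finite P"
    using ex_optimal_assign_nearest[OF \<open>finite T\<close>] by blast
  then have "finite K" using finite_subset by blast
  have mono: "mono_on K (\<lambda>k. fst (b k))"
    using assms(6) \<open>K \<subseteq> {..<m}\<close> by (auto simp: mono_on_def)
  show ?thesis
    by (intro exI conjI, fact opt, fact assign_nearest_consecutive[OF \<open>finite K\<close> mono \<open>finite P\<close>],
        fact assign_nearest_ordered[OF \<open>finite K\<close> mono \<open>finite P\<close>])
qed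

end
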